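(* Let $|q|<1$ and $|qa|,|qk|<|z|$, with parameters such that no denominator in the definition of $f$ vanishes for either argument order. Then $f(a,k,z,q)=-f(k,a,z,q)$.
   Context: Notation: $(x;q)_n=(1-x)(1-xq)\cdots(1-xq^{n-1})$, $(x_1,\dots,x_m;q)_n=(x_1;q)_n\cdots(x_m;q)_n$. Define $$f(a,k,z,q):=\sum_{n=1}^{\infty}\frac{(q\sqrt{k},-q\sqrt{k},k,z,k/a;q)_{n}}{(\sqrt{k},-\sqrt{k},qk,qk/z,qa;q)_{n}(1-q^n)}\left(\frac{qa}{z}\right)^{n}.$$ *)

theory Defs
  imports "HOL-Analysis.Analysis"
begin

definition qpoch :: "complex \<Rightarrow> complex \<Rightarrow> nat \<Rightarrow> complex" where
  "qpoch x q n = (\<Prod>j<n. 1 - x * q ^ j)"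

definition f_term :: "complex \<Rightarrow> complex \<Rightarrow> complex \<Rightarrow> complex \<Rightarrow> nat \<Rightarrow> complex" where
  "f_term a k z q n =
     (qpoch (q * csqrt k) q n * qpoch (- q * csqrt k) q n * qpoch k q n * qpoch z q n * qpoch (k / a) q n)
     / (qpoch (csqrt k) q n * qpoch (- csqrt k) q n * qpoch (q * k) q n * qpoch (q * k / z) q n
        * qpoch (q * a) q n * (1 - q ^ n))
     * (q * a / z) ^ n"

definition f :: "complex \<Rightarrow> complex \<Rightarrow> complex \<Rightarrow> complex \<Rightarrow> complex" where
  "f a k z q = (\<Sum>n. f_term a k z q (Suc n))"

end

theory Submission
  imports Defs
begin

text \<open>The very-well-poised quotients in the summand collapse, and a telescoping identity in the
  summation index shows that \<open>f(x) - f(xq) = c(x) := xq(1 - z) / ((z - xq)(1 - qx))\<close>, which does not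
  depend on \<open>k\<close>. Iterating, \<open>\<Sum>\<^sub>m c(xq\<^sup>m) = f(x) - F\<^sub>k\<close>, where \<open>F\<^sub>k\<close> is the value at \<open>0\<close> of the
  continuous extension of \<open>x \<mapsto> f(x, k, z, q)\<close>. Since \<open>f(x, x, z, q) = 0\<close> (the factor \<open>(x/x; q)\<^sub>n\<close>
  vanishes), taking \<open>x = a\<close> with parameters \<open>k\<close> and \<open>a\<close> gives \<open>f(a, k) = F\<^sub>k - F\<^sub>a\<close>, and taking
  \<open>x = k\<close> gives \<open>f(k, a) = F\<^sub>a - F\<^sub>k\<close>.\<close>

lemma qpoch_0 [simp]: "qpoch x q 0 = 1"
  by (simp add: qpoch_def)

lemma qpoch_Suc: "qpoch x q (Suc n) = qpoch x q n * (1 - x * q ^ n)"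
  by (simp add: qpoch_def)

lemma qpoch_Suc_shift: "qpoch x q (Suc n) = (1 - x) * qpoch (x * q) q n"
  unfolding qpoch_def prod.lessThan_Suc_shift by (simp add: algebra_simps)

lemma qpoch_nonzero_factor: "qpoch x q n \<noteq> 0 \<Longrightarrow> j < n \<Longrightarrow> 1 - x * q ^ j \<noteq> 0"
  by (auto simp: qpoch_def)

lemma qpoch_plus_minus:
  "qpoch (q * s) q n * qpoch (- q * s) q n * (1 - s\<^sup>2)
     = qpoch s q n * qpoch (- s) q n * (1 - s\<^sup>2 * (q ^ n)\<^sup>2)"
proof (induction n)
  case (Suc n)
  have "qpoch (q * s) q (Suc n) * qpoch (- q * s) q (Suc n) * (1 - s\<^sup>2)
      = (qpoch (q * s) q n * qpoch (- q * s) q n * (1 - s\<^sup>2)) * ((1 - q * s * q ^ n) * (1 + q * s * q ^ n))"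
    by (simp add: qpoch_Suc mult_ac)
  also have "\<dots> = qpoch s q n * qpoch (- s) q n * ((1 - s * q ^ n) * (1 + s * q ^ n)) * (1 - s\<^sup>2 * (q ^ Suc n)\<^sup>2)"
    by (simp only: Suc) (simp add: power2_eq_square algebra_simps)
  also have "\<dots> = qpoch s q (Suc n) * qpoch (- s) q (Suc n) * (1 - s\<^sup>2 * (q ^ Suc n)\<^sup>2)"
    by (simp add: qpoch_Suc mult_ac)
  finally show ?case .
qed simp

lemma qpoch_mult_last: "qpoch x q n * (1 - x * q ^ n) = (1 - x) * qpoch (q * x) q n"
  by (metis qpoch_Suc qpoch_Suc_shift mult.commute)

lemma qpoch_div_mult_power:
  assumes "y \<noteq> 0"
  shows "qpoch (x / y) q n * y ^ n = (\<Prod>j<n. y - x * q ^ j)"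
proof -
  have "qpoch (x / y) q n * y ^ n = (\<Prod>j<n. (1 - x / y * q ^ j) * y)"
    unfolding qpoch_def prod.distrib by simp
  also have "\<dots> = (\<Prod>j<n. y - x * q ^ j)"
    using assms by (intro prod.cong) (auto simp: field_simps)
  finally show ?thesis .
qed

lemma one_minus_power_nonzero:
  fixes q :: complex
  assumes "norm q < 1" "n \<ge> 1"
  shows "1 - q ^ n \<noteq> 0"
proof
  assume "1 - q ^ n = 0"
  then have "norm (q ^ n) = 1" by simp
  moreover have "norm (q ^ n) < 1"
    using assms by (simp add: norm_power power_less_one_iff)
  ultimately show False by simp
qed

lemma qpoch_nonzero_small:
  fixes q y :: complex
  assumes "norm q < 1" "norm y < 1"
  shows "qpoch (q * y) q n \<noteq> 0"
proof -
  have "norm (q * y * q ^ j) < 1" for j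
  proof -
    have "norm (q * y * q ^ j) = norm y * norm q ^ Suc j"
      by (simp add: norm_mult norm_power)
    also have "\<dots> \<le> norm y"
      using assms(1) by (intro mult_left_le power_le_one) auto
    finally show ?thesis using assms(2) by simp
  qed
  then have "1 - q * y * q ^ j \<noteq> 0" for j
    by (metis eq_iff_diff_eq_0 norm_one order.irrefl)
  then show ?thesis unfolding qpoch_def by simp
qed

lemma summable_ratio_limit:
  fixes t r :: "nat \<Rightarrow> 'a::{real_normed_field,banach}"
  assumes rec: "\<And>n. t (Suc n) = r n * t n" and lim: "r \<longlonglongrightarrow> L" and L: "norm L < 1"
  shows "summable t"
proof -
  define c where "c = (1 + norm L) / 2"
  have "norm L < c" "c < 1" using L by (auto simp: c_def)
  obtain N where N: "\<And>n. n \<ge> N \<Longrightarrow> norm (r n) < c"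
    using order_tendstoD(2)[OF tendsto_norm[OF lim] \<open>norm L < c\<close>]
    by (auto simp: eventually_sequentially)
  show ?thesis
  proof (rule summable_ratio_test[OF \<open>c < 1\<close>])
    fix n assume "n \<ge> N"
    then show "norm (t (Suc n)) \<le> c * norm (t n)"
      using N[of n] by (auto simp: rec norm_mult intro: mult_right_mono)
  qed
qed

definition arg_admissible :: "complex \<Rightarrow> complex \<Rightarrow> complex \<Rightarrow> bool" where
  "arg_admissible x z q \<longleftrightarrow> x \<noteq> 0 \<and> norm (q * x) < norm z \<and> (\<forall>n. qpoch (q * x) q n \<noteq> 0)"

text \<open>The summand of \<open>f\<close> after cancelling the very-well-poised quotients
  \<open>(q\<surd>k, -q\<surd>k; q)\<^sub>n / (\<surd>k, -\<surd>k; q)\<^sub>n = (1 - k q\<^sup>2\<^sup>n) / (1 - k)\<close> and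
  \<open>(k; q)\<^sub>n / (qk; q)\<^sub>n = (1 - k) / (1 - k q\<^sup>n)\<close>.\<close>
definition f_reduced :: "complex \<Rightarrow> complex \<Rightarrow> complex \<Rightarrow> complex \<Rightarrow> nat \<Rightarrow> complex" where
  "f_reduced x k z q n =
     (1 - k * (q ^ n)\<^sup>2) / (1 - k * q ^ n) * (qpoch z q n / qpoch (q * k / z) q n)
     * (qpoch (k / x) q n / (qpoch (q * x) q n * (1 - q ^ n))) * (q * x / z) ^ n"

definition f_antidiff :: "complex \<Rightarrow> complex \<Rightarrow> complex \<Rightarrow> complex \<Rightarrow> nat \<Rightarrow> complex" where
  "f_antidiff x k z q n =
     - (x * q / (z - x * q)) * qpoch z q (Suc n) * qpoch (k / x) q n
     / (qpoch (q * k / z) q n * qpoch (q * x) q (Suc n)) * (q * x / z) ^ n"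

definition shift_defect :: "complex \<Rightarrow> complex \<Rightarrow> complex \<Rightarrow> complex" where
  "shift_defect z q x = x * q / (z - x * q) * (1 - z) / (1 - q * x)"

definition f_ext_coeff :: "complex \<Rightarrow> complex \<Rightarrow> complex \<Rightarrow> nat \<Rightarrow> complex" where
  "f_ext_coeff k z q n =
     (1 - k * (q ^ n)\<^sup>2) / (1 - k * q ^ n) * (qpoch z q n / qpoch (q * k / z) q n)
     * (1 / (1 - q ^ n)) * (q / z) ^ n"

definition f_ext_coeff_ratio :: "complex \<Rightarrow> complex \<Rightarrow> complex \<Rightarrow> nat \<Rightarrow> complex" where
  "f_ext_coeff_ratio k z q n =
     (1 - k * (q * q ^ n)\<^sup>2) * (1 - k * q ^ n) / ((1 - k * (q * q ^ n)) * (1 - k * (q ^ n)\<^sup>2))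
     * (1 - z * q ^ n) / (1 - q * k / z * q ^ n) * (1 - q ^ n) / (1 - q * q ^ n) * (q / z)"

text \<open>Writing \<open>(k/x; q)\<^sub>n x\<^sup>n = \<Prod>\<^sub>j\<^sub><\<^sub>n (x - k q\<^sup>j)\<close> removes the singularity of the summand
  at \<open>x = 0\<close>, so \<open>f_ext k z q\<close> continues \<open>x \<mapsto> f x k z q\<close> to a neighbourhood of \<open>0\<close>.\<close>
definition f_ext_term :: "complex \<Rightarrow> complex \<Rightarrow> complex \<Rightarrow> nat \<Rightarrow> complex \<Rightarrow> complex" where
  "f_ext_term k z q n y = f_ext_coeff k z q n * (\<Prod>j<n. y - k * q ^ j) / qpoch (q * y) q n"

definition f_ext :: "complex \<Rightarrow> complex \<Rightarrow> complex \<Rightarrow> complex \<Rightarrow> complex" where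
  "f_ext k z q y = (\<Sum>n. f_ext_term k z q (Suc n) y)"

definition f_ext_majorant :: "complex \<Rightarrow> complex \<Rightarrow> complex \<Rightarrow> real \<Rightarrow> nat \<Rightarrow> real" where
  "f_ext_majorant k z q \<delta> n =
     norm (f_ext_coeff k z q n) * (\<Prod>j<n. \<delta> + norm k * norm q ^ j) / (\<Prod>j<n. 1 - \<delta> * norm q ^ Suc j)"

lemma f_diag_eq_0:
  assumes "x \<noteq> 0"
  shows "f x x z q = 0"
proof -
  have "f_term x x z q (Suc n) = 0" for n
    using assms by (simp add: f_term_def qpoch_Suc_shift)
  then show ?thesis by (simp add: f_def)
qed

lemma f_reduced_eq_f_ext_term:
  assumes "y \<noteq> 0"
  shows "f_reduced y k z q n = f_ext_term k z q n y"
proof -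
  have "f_reduced y k z q n = f_ext_coeff k z q n * (qpoch (k / y) q n * y ^ n) / qpoch (q * y) q n"
    unfolding f_reduced_def f_ext_coeff_def by (simp add: divide_inverse power_mult_distrib mult_ac)
  then show ?thesis
    unfolding f_ext_term_def qpoch_div_mult_power[OF assms] .
qed

lemma arg_admissible_factor_nonzero: "arg_admissible x z q \<Longrightarrow> 1 - q * x * q ^ j \<noteq> 0"
  using qpoch_nonzero_factor[of "q * x" q "Suc j" j] by (auto simp: arg_admissible_def)

lemma arg_admissible_z_minus_nonzero: "arg_admissible x z q \<Longrightarrow> z - x * q \<noteq> 0"
  by (auto simp: arg_admissible_def mult.commute)

lemma telescoping_core_identity:
  fixes x k z q Q d1 d2 d4 d5 d6 d7 :: complex
  assumes nz: "x \<noteq> 0" "z \<noteq> 0" "q \<noteq> 0" "d1 \<noteq> 0" "d2 \<noteq> 0" "d4 \<noteq> 0" "d5 \<noteq> 0" "d7 \<noteq> 0"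
    and defs: "d1 = 1 - k * (q * Q)" "d2 = 1 - q * k / z * Q" "d4 = 1 - q * x * (q * Q)"
      "d5 = 1 - q * Q" "d6 = 1 - q * x" "d7 = z - x * q"
  shows "(1 - k * (q * Q)\<^sup>2) / (d1 * d2 * d5) * ((x - k * Q) * q / z)
       - (1 - k * (q * Q)\<^sup>2) / (d1 * d2 * d5) * ((x * q - k) * d6 * Q * q / (z * d4))
     = - (x * q / d7) * (1 - z * q * Q) * (x - k * Q) * q / (z * d2 * d4) - (- (x * q / d7))"
proof -
  have left: "(x - k * Q) * d4 - (x * q - k) * d6 * Q = x * d5 * d1"
    unfolding defs by (simp add: algebra_simps)
  have "z * d2 = z - q * k * Q" using nz unfolding defs by (simp add: field_simps)
  then have right: "z * d2 * d4 - (1 - z * q * Q) * (x - k * Q) * q = d7 * (1 - k * (q * Q)\<^sup>2)"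
    unfolding defs by (simp add: algebra_simps power2_eq_square)
  have "(1 - k * (q * Q)\<^sup>2) / (d1 * d2 * d5) * ((x - k * Q) * q / z)
       - (1 - k * (q * Q)\<^sup>2) / (d1 * d2 * d5) * ((x * q - k) * d6 * Q * q / (z * d4))
      = (1 - k * (q * Q)\<^sup>2) * q / (z * d1 * d2 * d5 * d4) * ((x - k * Q) * d4 - (x * q - k) * d6 * Q)"
    using nz by (simp add: field_simps)
  also have "\<dots> = (1 - k * (q * Q)\<^sup>2) * q * x / (z * d2 * d4)"
    unfolding left using nz by (simp add: field_simps)
  also have "\<dots> = (x * q / d7) * (z * d2 * d4 - (1 - z * q * Q) * (x - k * Q) * q) / (z * d2 * d4)"
    unfolding right using nz by (simp add: field_simps)
  also have "\<dots> = - (x * q / d7) * (1 - z * q * Q) * (x - k * Q) * q / (z * d2 * d4) - (- (x * q / d7))"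
    using nz by (simp add: field_simps)
  finally show ?thesis .
qed

text \<open>With \<open>Q = q\<^sup>n\<close> and \<open>Z, K, R, X, P\<close> standing for \<open>(z; q)\<^sub>n\<close>, \<open>(k/x; q)\<^sub>n\<close>, \<open>(qk/z; q)\<^sub>n\<close>,
  \<open>(qx; q)\<^sub>n\<close>, \<open>(qx/z)\<^sup>n\<close>, this is \<open>f_reduced_telescoping\<close> with all factorials unfolded.\<close>
lemma telescoping_identity:
  fixes x k z q Q Z K R X P d1 d2 d3 d4 d5 d6 d7 :: complex
  assumes nz: "x \<noteq> 0" "z \<noteq> 0" "q \<noteq> 0" "R \<noteq> 0" "X \<noteq> 0" "d1 \<noteq> 0" "d2 \<noteq> 0" "d3 \<noteq> 0"
      "d4 \<noteq> 0" "d5 \<noteq> 0" "d6 \<noteq> 0" "d7 \<noteq> 0"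
    and defs: "d1 = 1 - k * (q * Q)" "d2 = 1 - q * k / z * Q" "d3 = 1 - q * x * Q"
      "d4 = 1 - q * x * (q * Q)" "d5 = 1 - q * Q" "d6 = 1 - q * x" "d7 = z - x * q"
  shows "(1 - k * (q * Q)\<^sup>2) / d1 * (Z * (1 - z * Q) / (R * d2))
         * (K * (1 - k / x * Q) / (X * d3 * d5)) * ((q * x / z) * P)
       - (1 - k * (q * Q)\<^sup>2) / d1 * (Z * (1 - z * Q) / (R * d2))
         * ((1 - k / (x * q)) * K / (X * d3 * d4 / d6 * d5)) * ((q * x / z) * P * (q * Q))
     = - (x * q / d7) * (Z * (1 - z * Q) * (1 - z * (q * Q))) * (K * (1 - k / x * Q))
         / ((R * d2) * (X * d3 * d4)) * ((q * x / z) * P)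
       - (- (x * q / d7) * (Z * (1 - z * Q)) * K / (R * (X * d3)) * P)"
proof -
  define C where "C = Z * (1 - z * Q) * K * P / (R * X * d3)"
  have "(1 - k * (q * Q)\<^sup>2) / d1 * (Z * (1 - z * Q) / (R * d2))
        * (K * (1 - k / x * Q) / (X * d3 * d5)) * ((q * x / z) * P)
      = C * ((1 - k * (q * Q)\<^sup>2) / (d1 * d2 * d5) * ((x - k * Q) * q / z))"
    "(1 - k * (q * Q)\<^sup>2) / d1 * (Z * (1 - z * Q) / (R * d2))
        * ((1 - k / (x * q)) * K / (X * d3 * d4 / d6 * d5)) * ((q * x / z) * P * (q * Q))
      = C * ((1 - k * (q * Q)\<^sup>2) / (d1 * d2 * d5) * ((x * q - k) * d6 * Q * q / (z * d4)))"
    "- (x * q / d7) * (Z * (1 - z * Q) * (1 - z * (q * Q))) * (K * (1 - k / x * Q))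
        / ((R * d2) * (X * d3 * d4)) * ((q * x / z) * P)
      = C * (- (x * q / d7) * (1 - z * q * Q) * (x - k * Q) * q / (z * d2 * d4))"
    "- (x * q / d7) * (Z * (1 - z * Q)) * K / (R * (X * d3)) * P = C * (- (x * q / d7))"
    unfolding C_def using nz by (simp_all add: field_simps)
  then show ?thesis
    using telescoping_core_identity[OF nz(1,2,3,6,7,9,10,12) defs(1,2,4,5,6,7)]
    by (metis right_diff_distrib)
qed

lemma one_minus_delta_power_pos:
  assumes "norm (q::complex) < 1" "0 < \<delta>" "\<delta> \<le> 1"
  shows "0 < 1 - \<delta> * norm q ^ Suc j"
proof -
  have "\<delta> * norm q ^ Suc j \<le> norm q ^ Suc j"
    using assms(2,3) by (intro mult_left_le_one_le) auto
  also have "\<dots> \<le> norm q" using assms(1) by (intro power_decreasing[of 1, simplified]) auto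
  finally show ?thesis using assms(1) by simp
qed

lemma continuous_on_f_ext_term:
  assumes "norm q < 1" "\<delta> \<le> 1"
  shows "continuous_on (ball 0 \<delta>) (f_ext_term k z q n)"
proof -
  have "\<forall>y\<in>ball 0 \<delta>. qpoch (q * y) q n \<noteq> 0"
    using qpoch_nonzero_small[OF assms(1)] assms(2) by auto
  then show ?thesis unfolding f_ext_term_def
    by (intro continuous_intros continuous_on_divide) (auto simp: qpoch_def intro!: continuous_intros)
qed

lemma norm_f_ext_term_le_majorant:
  assumes q: "norm q < 1" and \<delta>: "0 < \<delta>" "\<delta> \<le> 1" and y: "y \<in> ball 0 \<delta>"
  shows "norm (f_ext_term k z q n y) \<le> f_ext_majorant k z q \<delta> n"
proof -
  have "norm y < \<delta>" using y by simp
  have num: "(\<Prod>j<n. norm (y - k * q ^ j)) \<le> (\<Prod>j<n. \<delta> + norm k * norm q ^ j)"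
  proof (rule prod_mono)
    fix j
    have "norm (y - k * q ^ j) \<le> norm y + norm (k * q ^ j)" by (rule norm_triangle_ineq4)
    also have "\<dots> \<le> \<delta> + norm k * norm q ^ j"
      using \<open>norm y < \<delta>\<close> by (simp add: norm_mult norm_power)
    finally show "0 \<le> norm (y - k * q ^ j) \<and> norm (y - k * q ^ j) \<le> \<delta> + norm k * norm q ^ j"
      by simp
  qed
  have den: "(\<Prod>j<n. 1 - \<delta> * norm q ^ Suc j) \<le> (\<Prod>j<n. norm (1 - q * y * q ^ j))"
  proof (rule prod_mono)
    fix j
    have "norm (q * y * q ^ j) = norm y * norm q ^ Suc j" by (simp add: norm_mult norm_power)
    also have "\<dots> \<le> \<delta> * norm q ^ Suc j" using \<open>norm y < \<delta>\<close> by (intro mult_right_mono) auto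
    finally have "1 - \<delta> * norm q ^ Suc j \<le> norm (1::complex) - norm (q * y * q ^ j)" by simp
    also have "\<dots> \<le> norm (1 - q * y * q ^ j)" by (rule norm_triangle_ineq2)
    finally show "0 \<le> 1 - \<delta> * norm q ^ Suc j \<and> 1 - \<delta> * norm q ^ Suc j \<le> norm (1 - q * y * q ^ j)"
      using one_minus_delta_power_pos[OF q \<delta>, of j] by simp
  qed
  have "norm (f_ext_term k z q n y)
      = norm (f_ext_coeff k z q n) * (\<Prod>j<n. norm (y - k * q ^ j)) / (\<Prod>j<n. norm (1 - q * y * q ^ j))"
    unfolding f_ext_term_def qpoch_def by (simp add: norm_mult norm_divide prod_norm)
  also have "\<dots> \<le> f_ext_majorant k z q \<delta> n"
    unfolding f_ext_majorant_def
  proof (rule frac_le)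
    show "0 < (\<Prod>j<n. 1 - \<delta> * norm q ^ Suc j)"
      using one_minus_delta_power_pos[OF q \<delta>] by (intro prod_pos) auto
    show "0 \<le> norm (f_ext_coeff k z q n) * (\<Prod>j<n. \<delta> + norm k * norm q ^ j)"
      using \<delta> by (intro mult_nonneg_nonneg prod_nonneg) auto
  qed (use num den in \<open>auto intro: mult_left_mono\<close>)
  finally show ?thesis .
qed

locale wp_params =
  fixes k z q :: complex
  assumes q_nonzero: "q \<noteq> 0" and norm_q: "norm q < 1" and z_nonzero: "z \<noteq> 0"
    and qpoch_sqrt_nonzero: "qpoch (csqrt k) q n \<noteq> 0" "qpoch (- csqrt k) q n \<noteq> 0"
    and qpoch_qk_nonzero: "qpoch (q * k) q n \<noteq> 0"
    and qpoch_qkz_nonzero: "qpoch (q * k / z) q n \<noteq> 0"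
begin

lemma one_minus_k_power2_nonzero: "1 - k * (q ^ j)\<^sup>2 \<noteq> 0"
proof -
  have "csqrt k * csqrt k = k"
    using power2_csqrt[of k] by (simp only: power2_eq_square)
  then have "1 - k * (q ^ j)\<^sup>2 = (1 - csqrt k * q ^ j) * (1 - (- csqrt k) * q ^ j)"
    by (simp add: algebra_simps power2_eq_square)
  then show ?thesis
    using qpoch_nonzero_factor[OF qpoch_sqrt_nonzero(1), of j "Suc j"]
      qpoch_nonzero_factor[OF qpoch_sqrt_nonzero(2), of j "Suc j"] by simp
qed

lemma one_minus_k_nonzero: "1 - k \<noteq> 0"
  using one_minus_k_power2_nonzero[of 0] by simp

lemma one_minus_k_Suc_nonzero: "1 - k * q ^ Suc j \<noteq> 0"
  using qpoch_nonzero_factor[OF qpoch_qk_nonzero, of j "Suc j"] by (simp add: algebra_simps)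

lemma one_minus_qkz_nonzero: "1 - q * k / z * q ^ j \<noteq> 0"
  using qpoch_nonzero_factor[OF qpoch_qkz_nonzero, of j "Suc j"] by simp

lemma one_minus_q_power_nonzero: "n \<ge> 1 \<Longrightarrow> 1 - q ^ n \<noteq> 0"
  using one_minus_power_nonzero[OF norm_q] .

lemma f_term_eq_reduced:
  assumes "arg_admissible x z q" "n \<ge> 1"
  shows "f_term x k z q n = f_reduced x k z q n"
proof -
  have cancel: "A * K * Z * C / (B * QK * QZ * X * d) * w = p / v * (Z / QZ) * (C / (X * d)) * w"
    if "A * u = B * p" "K * v = u * QK" "B \<noteq> 0" "QK \<noteq> 0" "QZ \<noteq> 0" "X \<noteq> 0" "d \<noteq> 0"
       "u \<noteq> 0" "v \<noteq> 0"
    for A B K QK Z QZ C X d w u v p :: complex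
  proof -
    have "A = B * p / u" "K = u * QK / v" using that by (simp_all add: field_simps)
    then show ?thesis using that(3-9) by (simp add: field_simps)
  qed
  have sq: "qpoch (q * csqrt k) q n * qpoch (- q * csqrt k) q n * (1 - k)
      = qpoch (csqrt k) q n * qpoch (- csqrt k) q n * (1 - k * (q ^ n)\<^sup>2)"
    using qpoch_plus_minus[of q "csqrt k" n] by simp
  have "1 - k * q ^ n \<noteq> 0" using one_minus_k_Suc_nonzero[of "n - 1"] assms(2) by simp
  then show ?thesis
    unfolding f_term_def f_reduced_def
    using cancel[OF sq qpoch_mult_last[of k q n]] assms qpoch_sqrt_nonzero qpoch_qk_nonzero
      qpoch_qkz_nonzero one_minus_q_power_nonzero one_minus_k_nonzero
    by (simp add: arg_admissible_def mult.assoc)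
qed

lemma f_ext_coeff_Suc:
  assumes "m \<ge> 1"
  shows "f_ext_coeff k z q (Suc m) = f_ext_coeff_ratio k z q m * f_ext_coeff k z q m"
proof -
  have cancel: "N / D * (Z * a / (R * b)) * (1 / e) * (w * P)
      = (N * f / (D * p) * a / b * i / e * w) * (p / f * (Z / R) * (1 / i) * P)"
    if "D \<noteq> 0" "b \<noteq> 0" "e \<noteq> 0" "p \<noteq> 0" "f \<noteq> 0" "i \<noteq> 0" "R \<noteq> 0"
    for N D Z a R b e w P f p i :: complex
    using that by (simp add: field_simps)
  have "1 - k * q ^ m \<noteq> 0" using one_minus_k_Suc_nonzero[of "m - 1"] assms by simp
  show ?thesis
    unfolding f_ext_coeff_def f_ext_coeff_ratio_def qpoch_Suc power_Suc
    by (rule cancel)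
      (use \<open>1 - k * q ^ m \<noteq> 0\<close> assms one_minus_k_Suc_nonzero[of m] one_minus_qkz_nonzero
        one_minus_q_power_nonzero[of m] one_minus_q_power_nonzero[of "Suc m"]
        one_minus_k_power2_nonzero[of m] qpoch_qkz_nonzero in auto)
qed

lemma f_ext_term_Suc:
  assumes "m \<ge> 1" "qpoch (q * y) q (Suc m) \<noteq> 0"
  shows "f_ext_term k z q (Suc m) y
    = f_ext_coeff_ratio k z q m * (y - k * q ^ m) / (1 - q * y * q ^ m) * f_ext_term k z q m y"
  using assms(2) unfolding f_ext_term_def f_ext_coeff_Suc[OF assms(1)] qpoch_Suc
  by (simp add: field_simps)

lemma f_ext_coeff_ratio_tendsto: "(\<lambda>n. f_ext_coeff_ratio k z q (Suc n)) \<longlonglongrightarrow> q / z"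
proof -
  have "(\<lambda>n. q ^ Suc n) \<longlonglongrightarrow> 0"
    using LIMSEQ_Suc[OF LIMSEQ_power_zero[OF norm_q]] .
  then have "(\<lambda>n. f_ext_coeff_ratio k z q (Suc n))
      \<longlonglongrightarrow> (1 - k * (q * 0)\<^sup>2) * (1 - k * 0) / ((1 - k * (q * 0)) * (1 - k * 0\<^sup>2))
        * (1 - z * 0) / (1 - q * k / z * 0) * (1 - 0) / (1 - q * 0) * (q / z)"
    unfolding f_ext_coeff_ratio_def by (intro tendsto_intros) auto
  then show ?thesis by simp
qed

lemma summable_f_ext_term:
  assumes "\<And>n. qpoch (q * y) q n \<noteq> 0" "norm (q * y) < norm z"
  shows "summable (\<lambda>n. f_ext_term k z q (Suc n) y)"
proof (rule summable_ratio_limit)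
  show "f_ext_term k z q (Suc (Suc n)) y
      = f_ext_coeff_ratio k z q (Suc n) * (y - k * q ^ Suc n) / (1 - q * y * q ^ Suc n)
        * f_ext_term k z q (Suc n) y" for n
    using f_ext_term_Suc[of "Suc n" y] assms(1) by simp
  have "(\<lambda>n. q ^ Suc n) \<longlonglongrightarrow> 0"
    using LIMSEQ_Suc[OF LIMSEQ_power_zero[OF norm_q]] .
  then have "(\<lambda>n. f_ext_coeff_ratio k z q (Suc n) * (y - k * q ^ Suc n) / (1 - q * y * q ^ Suc n))
      \<longlonglongrightarrow> q / z * (y - k * 0) / (1 - q * y * 0)"
    by (intro tendsto_intros f_ext_coeff_ratio_tendsto) auto
  then show "(\<lambda>n. f_ext_coeff_ratio k z q (Suc n) * (y - k * q ^ Suc n) / (1 - q * y * q ^ Suc n))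
      \<longlonglongrightarrow> q * y / z" by simp
  show "norm (q * y / z) < 1"
    using assms(2) z_nonzero by (simp add: norm_divide divide_less_eq)
qed

lemma f_eq_f_ext:
  assumes "arg_admissible x z q"
  shows "f x k z q = f_ext k z q x"
  using assms unfolding f_def f_ext_def
  by (simp add: f_term_eq_reduced f_reduced_eq_f_ext_term arg_admissible_def)

lemma arg_admissible_shift:
  assumes "arg_admissible x z q"
  shows "arg_admissible (x * q) z q"
proof -
  have "norm (q * (x * q)) = norm q * norm (q * x)" by (simp add: norm_mult)
  also have "\<dots> \<le> norm (q * x)" using norm_q by (simp add: mult_left_le_one_le)
  finally have "norm (q * (x * q)) < norm z" using assms by (simp add: arg_admissible_def)
  moreover have "qpoch (q * (x * q)) q n \<noteq> 0" for n
    using qpoch_Suc_shift[of "q * x" q n] assms by (auto simp: arg_admissible_def mult_ac)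
  ultimately show ?thesis using assms q_nonzero by (simp add: arg_admissible_def)
qed

lemma arg_admissible_power: "arg_admissible x z q \<Longrightarrow> arg_admissible (x * q ^ m) z q"
proof (induction m)
  case (Suc m)
  then show ?case using arg_admissible_shift[of "x * q ^ m"] by (simp add: mult_ac)
qed simp

lemma f_reduced_telescoping:
  assumes x: "arg_admissible x z q"
  shows "f_reduced x k z q (Suc n) - f_reduced (x * q) k z q (Suc n)
    = f_antidiff x k z q (Suc n) - f_antidiff x k z q n"
proof -
  have "1 - q * x \<noteq> 0" using arg_admissible_factor_nonzero[OF x, of 0] by simp
  have "qpoch (q * x) q (Suc (Suc n)) = (1 - q * x) * qpoch (q * (x * q)) q (Suc n)"
    by (simp add: qpoch_Suc_shift mult_ac)
  then have qpoch_qxq: "qpoch (q * (x * q)) q (Suc n)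
      = qpoch (q * x) q n * (1 - q * x * q ^ n) * (1 - q * x * (q * q ^ n)) / (1 - q * x)"
    using \<open>1 - q * x \<noteq> 0\<close> by (simp add: qpoch_Suc field_simps)
  have qpoch_kxq: "qpoch (k / (x * q)) q (Suc n) = (1 - k / (x * q)) * qpoch (k / x) q n"
    using q_nonzero by (simp add: qpoch_Suc_shift)
  have power_xq: "(q * (x * q) / z) ^ Suc n = (q * x / z) * (q * x / z) ^ n * (q * q ^ n)"
    by (simp add: power_mult_distrib power_divide field_simps)
  show ?thesis
    unfolding f_reduced_def f_antidiff_def qpoch_kxq qpoch_qxq power_xq
    unfolding qpoch_Suc power_Suc
    by (rule telescoping_identity[where Q = "q ^ n"])
      (use x z_nonzero q_nonzero qpoch_qkz_nonzero one_minus_k_Suc_nonzero[of n]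
        one_minus_qkz_nonzero[of n] arg_admissible_factor_nonzero[OF x, of n]
        arg_admissible_factor_nonzero[OF x, of "Suc n"] one_minus_q_power_nonzero[of "Suc n"]
        \<open>1 - q * x \<noteq> 0\<close> arg_admissible_z_minus_nonzero[OF x] in \<open>auto simp: arg_admissible_def\<close>)
qed

lemma f_antidiff_tendsto_0:
  assumes x: "arg_admissible x z q"
  shows "f_antidiff x k z q \<longlonglongrightarrow> 0"
proof -
  have cancel: "- c * (Z * a * a') * (K * b) / (R * d * (X * e * e')) * (w * P)
      = (a' * b / (d * e') * w) * (- c * (Z * a) * K / (R * (X * e)) * P)"
    if "R \<noteq> 0" "d \<noteq> 0" "X \<noteq> 0" "e \<noteq> 0" "e' \<noteq> 0" for c Z a a' K b R d X e e' w P :: complex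
    using that by (simp add: field_simps)
  define r where "r n = (1 - z * (q * q ^ n)) * (1 - k / x * q ^ n)
    / ((1 - q * k / z * q ^ n) * (1 - q * x * (q * q ^ n))) * (q * x / z)" for n
  have "summable (f_antidiff x k z q)"
  proof (rule summable_ratio_limit)
    show "f_antidiff x k z q (Suc n) = r n * f_antidiff x k z q n" for n
      unfolding f_antidiff_def r_def qpoch_Suc power_Suc
      by (rule cancel) (use qpoch_qkz_nonzero one_minus_qkz_nonzero x
          arg_admissible_factor_nonzero[OF x, of n] arg_admissible_factor_nonzero[OF x, of "Suc n"]
          in \<open>auto simp: arg_admissible_def\<close>)
    have q0: "(\<lambda>n. q ^ n) \<longlonglongrightarrow> 0" using norm_q by (rule LIMSEQ_power_zero)
    have "r \<longlonglongrightarrow> (1 - z * (q * 0)) * (1 - k / x * 0)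
        / ((1 - q * k / z * 0) * (1 - q * x * (q * 0))) * (q * x / z)"
      unfolding r_def by (intro tendsto_intros q0) auto
    then show "r \<longlonglongrightarrow> q * x / z" by simp
    show "norm (q * x / z) < 1"
      using x z_nonzero by (simp add: arg_admissible_def norm_divide divide_less_eq)
  qed
  then show ?thesis by (rule summable_LIMSEQ_zero)
qed

lemma summable_f_reduced:
  assumes "arg_admissible x z q"
  shows "summable (\<lambda>n. f_reduced x k z q (Suc n))"
  using summable_f_ext_term[of x] assms
  by (simp add: f_reduced_eq_f_ext_term arg_admissible_def)

lemma f_minus_f_shift:
  assumes x: "arg_admissible x z q"
  shows "f x k z q - f (x * q) k z q = shift_defect z q x"
proof -
  note xq = arg_admissible_shift[OF x]
  have "(\<lambda>n. f_reduced x k z q (Suc n) - f_reduced (x * q) k z q (Suc n))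
      sums ((\<Sum>n. f_reduced x k z q (Suc n)) - (\<Sum>n. f_reduced (x * q) k z q (Suc n)))"
    by (intro sums_diff summable_sums summable_f_reduced x xq)
  moreover have "(\<lambda>n. f_reduced x k z q (Suc n) - f_reduced (x * q) k z q (Suc n))
      sums (- f_antidiff x k z q 0)"
    unfolding f_reduced_telescoping[OF x]
    using telescope_sums[OF f_antidiff_tendsto_0[OF x]] by simp
  moreover have "f y k z q = (\<Sum>n. f_reduced y k z q (Suc n))" if "arg_admissible y z q" for y
    unfolding f_def using f_term_eq_reduced[OF that] by simp
  ultimately have "f x k z q - f (x * q) k z q = - f_antidiff x k z q 0"
    using x xq sums_unique2 by metis
  then show ?thesis by (simp add: f_antidiff_def shift_defect_def qpoch_Suc)
qed

lemma sum_shift_defect: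
  assumes "arg_admissible x z q"
  shows "(\<Sum>m<M. shift_defect z q (x * q ^ m)) = f x k z q - f (x * q ^ M) k z q"
proof (induction M)
  case (Suc M)
  have "(\<Sum>m<Suc M. shift_defect z q (x * q ^ m))
      = f x k z q - f (x * q ^ M) k z q + (f (x * q ^ M) k z q - f (x * q ^ M * q) k z q)"
    by (simp only: sum.lessThan_Suc Suc f_minus_f_shift[OF arg_admissible_power[OF assms]])
  then show ?case by (simp add: mult_ac)
qed simp

lemma summable_f_ext_majorant:
  assumes \<delta>: "0 < \<delta>" "\<delta> \<le> 1" "\<delta> \<le> norm z / 2"
  shows "summable (\<lambda>n. f_ext_majorant k z q \<delta> (Suc n))"
proof (rule summable_ratio_limit)
  define r where "r n = norm (f_ext_coeff_ratio k z q (Suc n)) * (\<delta> + norm k * norm q ^ Suc n)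
    / (1 - \<delta> * norm q ^ Suc (Suc n))" for n
  show "f_ext_majorant k z q \<delta> (Suc (Suc n)) = r n * f_ext_majorant k z q \<delta> (Suc n)" for n
  proof -
    have "(\<Prod>j<Suc n. 1 - \<delta> * norm q ^ Suc j) \<noteq> 0"
      using one_minus_delta_power_pos[OF norm_q \<delta>(1,2)]
      by (intro prod_pos[THEN less_imp_neq, THEN not_sym]) auto
    then show ?thesis
      using one_minus_delta_power_pos[OF norm_q \<delta>(1,2), of "Suc n"]
      unfolding f_ext_majorant_def r_def f_ext_coeff_Suc[of "Suc n", simplified] prod.lessThan_Suc[of _ "Suc n"]
      by (simp add: norm_mult field_simps)
  qed
  have q0: "(\<lambda>n. norm q ^ Suc n) \<longlonglongrightarrow> 0"
    using LIMSEQ_Suc[OF LIMSEQ_power_zero[of "norm q"]] norm_q by simp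
  have "r \<longlonglongrightarrow> norm (q / z) * (\<delta> + norm k * 0) / (1 - \<delta> * 0)"
    unfolding r_def by (intro tendsto_intros f_ext_coeff_ratio_tendsto q0 LIMSEQ_Suc[OF q0]) auto
  then show "r \<longlonglongrightarrow> norm (q / z) * \<delta>" by simp
  have "norm (q / z) * \<delta> \<le> norm (q / z) * (norm z / 2)" using \<delta> by (intro mult_left_mono) auto
  also have "\<dots> < 1" using norm_q z_nonzero by (simp add: norm_divide)
  finally show "norm (norm (q / z) * \<delta>) < 1" using \<delta> by simp
qed

lemma continuous_on_f_ext:
  assumes "0 < \<delta>" "\<delta> \<le> 1" "\<delta> \<le> norm z / 2"
  shows "continuous_on (ball 0 \<delta>) (f_ext k z q)"
proof -
  have "uniform_limit (ball 0 \<delta>) (\<lambda>n y. \<Sum>i<n. f_ext_term k z q (Suc i) y) (f_ext k z q) sequentially"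
    unfolding f_ext_def[abs_def]
    using norm_f_ext_term_le_majorant[OF norm_q assms(1,2)] summable_f_ext_majorant[OF assms]
    by (rule Weierstrass_m_test)
  then show ?thesis
    by (rule uniform_limit_theorem[rotated])
      (auto intro!: always_eventually continuous_on_sum continuous_on_f_ext_term norm_q assms(2))
qed

lemma f_tendsto_f_ext_0:
  assumes x: "arg_admissible x z q"
  shows "(\<lambda>m. f (x * q ^ m) k z q) \<longlonglongrightarrow> f_ext k z q 0"
proof -
  define \<delta> where "\<delta> = min 1 (norm z / 2)"
  have \<delta>: "0 < \<delta>" "\<delta> \<le> 1" "\<delta> \<le> norm z / 2" using z_nonzero by (auto simp: \<delta>_def)
  have "(\<lambda>m. x * q ^ m) \<longlonglongrightarrow> 0"
    using tendsto_mult_right_zero[OF LIMSEQ_power_zero[OF norm_q]] .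
  moreover have "eventually (\<lambda>m. x * q ^ m \<in> ball 0 \<delta>) sequentially"
    using tendstoD[OF calculation \<delta>(1)] by (simp add: dist_commute)
  ultimately have "(\<lambda>m. f_ext k z q (x * q ^ m)) \<longlonglongrightarrow> f_ext k z q 0"
    by (intro continuous_on_tendsto_compose[OF continuous_on_f_ext[OF \<delta>]]) (use \<delta> in simp_all)
  then show ?thesis
    using f_eq_f_ext[OF arg_admissible_power[OF x]] by simp
qed

lemma shift_defect_sums:
  assumes "arg_admissible x z q"
  shows "(\<lambda>m. shift_defect z q (x * q ^ m)) sums (f x k z q - f_ext k z q 0)"
  unfolding sums_def sum_shift_defect[OF assms]
  by (intro tendsto_intros f_tendsto_f_ext_0[OF assms])

end

lemma f_antisym:
  assumes "wp_params k z q" "wp_params a z q" "arg_admissible a z q" "arg_admissible k z q"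
  shows "f a k z q = - f k a z q"
proof -
  interpret K: wp_params k z q by fact
  interpret A: wp_params a z q by fact
  have "f a k z q - f_ext k z q 0 = f a a z q - f_ext a z q 0"
    by (rule sums_unique2[OF K.shift_defect_sums[OF assms(3)] A.shift_defect_sums[OF assms(3)]])
  moreover have "f k k z q - f_ext k z q 0 = f k a z q - f_ext a z q 0"
    by (rule sums_unique2[OF K.shift_defect_sums[OF assms(4)] A.shift_defect_sums[OF assms(4)]])
  ultimately have "f a k z q + f k a z q = 0"
    using f_diag_eq_0[of a z q] f_diag_eq_0[of k z q] assms(3,4)
    by (simp add: arg_admissible_def algebra_simps)
  then show ?thesis by (simp add: eq_neg_iff_add_eq_0)
qed

theorem lemma2p2:
  fixes a k z q :: complex
  assumes "norm q < 1" and "a \<noteq> 0" and "k \<noteq> 0"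
    and "norm (q * a) < norm z" and "norm (q * k) < norm z"
    and "\<And>n. n \<ge> 1 \<Longrightarrow> qpoch (csqrt k) q n \<noteq> 0 \<and> qpoch (- csqrt k) q n \<noteq> 0
            \<and> qpoch (q * k) q n \<noteq> 0 \<and> qpoch (q * k / z) q n \<noteq> 0
            \<and> qpoch (q * a) q n \<noteq> 0 \<and> 1 - q ^ n \<noteq> 0"
    and "\<And>n. n \<ge> 1 \<Longrightarrow> qpoch (csqrt a) q n \<noteq> 0 \<and> qpoch (- csqrt a) q n \<noteq> 0
            \<and> qpoch (q * a) q n \<noteq> 0 \<and> qpoch (q * a / z) q n \<noteq> 0
            \<and> qpoch (q * k) q n \<noteq> 0 \<and> 1 - q ^ n \<noteq> 0"
  shows "f a k z q = - f k a z q"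
proof (cases "q = 0")
  case True
  then show ?thesis by (simp add: f_def f_term_def)
next
  case False
  have z: "z \<noteq> 0" using assms(4) by auto
  have all_n: "qpoch x q n \<noteq> 0" if "\<And>n. n \<ge> 1 \<Longrightarrow> qpoch x q n \<noteq> 0" for x n
    using that by (cases n) auto
  have k_facts: "qpoch (csqrt k) q n \<noteq> 0" "qpoch (- csqrt k) q n \<noteq> 0" "qpoch (q * k) q n \<noteq> 0"
      "qpoch (q * k / z) q n \<noteq> 0" "qpoch (q * a) q n \<noteq> 0" for n
    by (rule all_n; simp add: assms(6))+
  have a_facts: "qpoch (csqrt a) q n \<noteq> 0" "qpoch (- csqrt a) q n \<noteq> 0"
      "qpoch (q * a / z) q n \<noteq> 0" for n
    by (rule all_n; simp add: assms(7))+
  have "wp_params k z q" "wp_params a z q"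
    by (unfold_locales; simp add: False z assms(1) k_facts a_facts)+
  moreover have "arg_admissible a z q" "arg_admissible k z q"
    unfolding arg_admissible_def using assms(2-5) k_facts by simp_all
  ultimately show ?thesis by (rule f_antisym)
qed

end
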